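(* Let $\mathcal{C}$ be a covering of a finite set $E$. For $x\in E$ let $N(x)=\bigcap\{K\in\mathcal{C}:x\in K\}$, and define $VH:2^E\to 2^E$ by $VH(X)=\bigcup\{N(x):x\in E,\ N(x)\cap X\neq\emptyset\}$. Then $VH$ is the closure operator of some matroid on $E$ if and only if $\{VH(\{x\}):x\in E\}$ forms a partition of $E$.
   Context: A covering of $E$ is a family of nonempty subsets of $E$ with union $E$. "$\{VH(\{x\}):x\in E\}$ forms a partition" means the distinct sets among the $VH(\{x\})$ are pairwise disjoint (their union is $E$ since $x\in VH(\{x\})$). The closure operator of a matroid with rank function $r$ is $cl(X)=\{a\in E:r(X\cup\{a\})=r(X)\}$. *)

theory Defs
  imports Main
begin

definition covering :: "'a set \<Rightarrow> 'a set set \<Rightarrow> bool" where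
  "covering E \<C> \<longleftrightarrow> (\<forall>K\<in>\<C>. K \<noteq> {} \<and> K \<subseteq> E) \<and> \<Union>\<C> = E"

definition Nbh :: "'a set set \<Rightarrow> 'a \<Rightarrow> 'a set" where
  "Nbh \<C> x = \<Inter>{K\<in>\<C>. x \<in> K}"

definition VH :: "'a set \<Rightarrow> 'a set set \<Rightarrow> 'a set \<Rightarrow> 'a set" where
  "VH E \<C> X = \<Union>{Nbh \<C> x | x. x \<in> E \<and> Nbh \<C> x \<inter> X \<noteq> {}}"

definition matroid_rank :: "'a set \<Rightarrow> ('a set \<Rightarrow> nat) \<Rightarrow> bool" where
  "matroid_rank E r \<longleftrightarrow> finite E \<and>
     (\<forall>X. X \<subseteq> E \<longrightarrow> r X \<le> card X) \<and>
     (\<forall>X Y. X \<subseteq> Y \<and> Y \<subseteq> E \<longrightarrow> r X \<le> r Y) \<and>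
     (\<forall>X Y. X \<subseteq> E \<and> Y \<subseteq> E \<longrightarrow> r (X \<union> Y) + r (X \<inter> Y) \<le> r X + r Y)"

definition matroid_cl :: "'a set \<Rightarrow> ('a set \<Rightarrow> nat) \<Rightarrow> 'a set \<Rightarrow> 'a set" where
  "matroid_cl E r X = {a\<in>E. r (X \<union> {a}) = r X}"

definition forms_partition :: "'a set \<Rightarrow> ('a \<Rightarrow> 'a set) \<Rightarrow> bool" where
  "forms_partition E S \<longleftrightarrow> (\<forall>x\<in>E. \<forall>y\<in>E. S x = S y \<or> S x \<inter> S y = {})"

end

theory Submission
  imports Defs
begin

text \<open>Both directions rest on the fact that a point lies in \<open>VH({x})\<close> iff it shares
some \<open>N(z)\<close> with \<open>x\<close>, a reflexive and symmetric relation, and \<open>VH(X)\<close> is the union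
of the \<open>VH({x})\<close> over \<open>x \<in> X\<close>. If \<open>VH\<close> is a matroid closure, closures of singletons
are transitive, so this relation is an equivalence and its classes partition \<open>E\<close>.
Conversely, if the \<open>VH({x})\<close> partition \<open>E\<close>, the rank counting the classes met by \<open>X\<close>
is a matroid rank whose closure adds exactly the classes met by \<open>X\<close>, i.e. \<open>VH(X)\<close>.\<close>

lemma Nbh_subset:
  assumes "covering E C" "z \<in> E"
  shows "Nbh C z \<subseteq> E"
proof -
  obtain K where "K \<in> C" "z \<in> K" using assms unfolding covering_def by blast
  then show ?thesis using assms(1) unfolding covering_def Nbh_def by blast
qed

lemma mem_VH_singleton_iff: "a \<in> VH E C {x} \<longleftrightarrow> (\<exists>z\<in>E. a \<in> Nbh C z \<and> x \<in> Nbh C z)"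
  unfolding VH_def by blast

lemma VH_eq_UN_singleton: "VH E C X = (\<Union>x\<in>X. VH E C {x})"
  unfolding VH_def by blast

lemma VH_singleton_sym: "a \<in> VH E C {x} \<Longrightarrow> x \<in> VH E C {a}"
  unfolding mem_VH_singleton_iff by blast

lemma VH_singleton_refl: "x \<in> E \<Longrightarrow> x \<in> VH E C {x}"
  unfolding mem_VH_singleton_iff Nbh_def by blast

lemma VH_subset: "covering E C \<Longrightarrow> VH E C X \<subseteq> E"
  unfolding VH_def by (auto dest: Nbh_subset)

lemma matroid_cl_singleton_trans:
  assumes r: "matroid_rank E r" and E: "x \<in> E" "y \<in> E"
    and ax: "a \<in> matroid_cl E r {x}" and xy: "x \<in> matroid_cl E r {y}"
  shows "a \<in> matroid_cl E r {y}"
proof -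
  have submod: "\<And>X Y. X \<subseteq> E \<Longrightarrow> Y \<subseteq> E \<Longrightarrow> r (X \<union> Y) + r (X \<inter> Y) \<le> r X + r Y"
    and mono: "\<And>X Y. X \<subseteq> Y \<Longrightarrow> Y \<subseteq> E \<Longrightarrow> r X \<le> r Y"
    using r unfolding matroid_rank_def by blast+
  have aE: "a \<in> E" and "r {x,a} = r {x}" "r {y,x} = r {y}"
    using ax xy unfolding matroid_cl_def by (auto simp: insert_commute)
  moreover have "r ({y,x} \<union> {x,a}) + r ({y,x} \<inter> {x,a}) \<le> r {y,x} + r {x,a}"
    using E aE by (intro submod) auto
  moreover have "r {x} \<le> r ({y,x} \<inter> {x,a})" "r {y,a} \<le> r ({y,x} \<union> {x,a})" "r {y} \<le> r {y,a}"
    using E aE by (auto intro!: mono)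
  ultimately have "r {y,a} = r {y}" by linarith
  then show ?thesis using aE unfolding matroid_cl_def by (simp add: insert_commute)
qed

lemma forms_partitionI:
  assumes "\<And>x. x \<in> E \<Longrightarrow> S x \<subseteq> E"
    and sym: "\<And>a x. a \<in> S x \<Longrightarrow> x \<in> S a"
    and trans: "\<And>a x y. x \<in> E \<Longrightarrow> y \<in> E \<Longrightarrow> a \<in> S x \<Longrightarrow> x \<in> S y \<Longrightarrow> a \<in> S y"
  shows "forms_partition E S"
  unfolding forms_partition_def
proof (intro ballI)
  fix x y assume x: "x \<in> E" and y: "y \<in> E"
  show "S x = S y \<or> S x \<inter> S y = {}"
  proof (cases "S x \<inter> S y = {}")
    case False
    then obtain a where a: "a \<in> S x" "a \<in> S y" by blast
    with assms(1) x have aE: "a \<in> E" by blast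
    have "x \<in> S y" "y \<in> S x"
      using trans[OF aE y sym[OF a(1)] a(2)] trans[OF aE x sym[OF a(2)] a(1)] .
    then have "S x = S y" using trans[OF x y] trans[OF y x] by blast
    then show ?thesis ..
  qed simp
qed

lemma forms_partition_eq:
  assumes "forms_partition E S" "\<And>x. x \<in> E \<Longrightarrow> x \<in> S x"
    and "a \<in> E" "x \<in> E" "a \<in> S x"
  shows "S a = S x"
  using assms unfolding forms_partition_def by blast

lemma matroid_rank_card_image:
  assumes "finite E"
  shows "matroid_rank E (\<lambda>X. card (f ` X))"
  unfolding matroid_rank_def
proof (intro conjI allI impI)
  show "finite E" by fact
  fix X assume "X \<subseteq> E"
  then show "card (f ` X) \<le> card X"
    using assms by (meson card_image_le finite_subset)
next
  fix X Y assume "X \<subseteq> Y \<and> Y \<subseteq> E"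
  then show "card (f ` X) \<le> card (f ` Y)"
    using assms by (meson card_mono finite_imageI finite_subset image_mono)
next
  fix X Y assume "X \<subseteq> E \<and> Y \<subseteq> E"
  then have fin: "finite (f ` X)" "finite (f ` Y)" using assms finite_subset by auto
  have "card (f ` (X \<inter> Y)) \<le> card (f ` X \<inter> f ` Y)"
    using fin by (intro card_mono) auto
  then show "card (f ` (X \<union> Y)) + card (f ` (X \<inter> Y)) \<le> card (f ` X) + card (f ` Y)"
    using card_Un_Int[OF fin] by (simp add: image_Un)
qed

lemma matroid_cl_card_image:
  assumes "finite X"
  shows "matroid_cl E (\<lambda>X. card (f ` X)) X = {a \<in> E. f a \<in> f ` X}"
  using assms unfolding matroid_cl_def by (auto simp: card_insert_if)

lemma VH_eq_if_forms_partition: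
  assumes C: "covering E C" and p: "forms_partition E (\<lambda>x. VH E C {x})" and X: "X \<subseteq> E"
  shows "VH E C X = {a \<in> E. VH E C {a} \<in> (\<lambda>x. VH E C {x}) ` X}"
proof (intro equalityI subsetI)
  fix a assume "a \<in> VH E C X"
  then obtain x where x: "x \<in> X" and ax: "a \<in> VH E C {x}"
    unfolding VH_eq_UN_singleton[of E C X] by blast
  have aE: "a \<in> E" using VH_subset[OF C] ax by blast
  have "VH E C {a} = VH E C {x}"
    using forms_partition_eq[OF p VH_singleton_refl aE _ ax] x X by blast
  then show "a \<in> {a \<in> E. VH E C {a} \<in> (\<lambda>x. VH E C {x}) ` X}" using aE x by auto
next
  fix a assume "a \<in> {a \<in> E. VH E C {a} \<in> (\<lambda>x. VH E C {x}) ` X}"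
  then obtain x where "a \<in> E" "x \<in> X" "VH E C {a} = VH E C {x}" by blast
  then have "x \<in> X" "a \<in> VH E C {x}" using VH_singleton_refl[of a E C] by auto
  then show "a \<in> VH E C X" unfolding VH_eq_UN_singleton[of E C X] by blast
qed

lemma forms_partition_VH_singleton_if_matroid_cl:
  assumes C: "covering E C" and r: "matroid_rank E r"
    and cl: "\<And>x. x \<in> E \<Longrightarrow> VH E C {x} = matroid_cl E r {x}"
  shows "forms_partition E (\<lambda>x. VH E C {x})"
proof (rule forms_partitionI)
  fix a x y assume E: "x \<in> E" "y \<in> E" and "a \<in> VH E C {x}" "x \<in> VH E C {y}"
  then have "a \<in> matroid_cl E r {x}" "x \<in> matroid_cl E r {y}" by (simp_all add: cl)
  then show "a \<in> VH E C {y}" using matroid_cl_singleton_trans[OF r E] cl[OF E(2)] by blast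
qed (rule VH_subset[OF C], erule VH_singleton_sym)

theorem theorem11:
  fixes E :: "'a set" and \<C> :: "'a set set"
  assumes "finite E" and "covering E \<C>"
  shows "(\<exists>r. matroid_rank E r \<and> (\<forall>X. X \<subseteq> E \<longrightarrow> VH E \<C> X = matroid_cl E r X))
         \<longleftrightarrow> forms_partition E (\<lambda>x. VH E \<C> {x})"
proof
  assume "\<exists>r. matroid_rank E r \<and> (\<forall>X. X \<subseteq> E \<longrightarrow> VH E \<C> X = matroid_cl E r X)"
  then obtain r where r: "matroid_rank E r"
    and cl: "\<forall>X. X \<subseteq> E \<longrightarrow> VH E \<C> X = matroid_cl E r X"
    by blast
  show "forms_partition E (\<lambda>x. VH E \<C> {x})"
    using cl by (intro forms_partition_VH_singleton_if_matroid_cl[OF assms(2) r]) simp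
next
  assume p: "forms_partition E (\<lambda>x. VH E \<C> {x})"
  let ?f = "\<lambda>x. VH E \<C> {x}"
  have "VH E \<C> X = matroid_cl E (\<lambda>X. card (?f ` X)) X" if "X \<subseteq> E" for X
    unfolding VH_eq_if_forms_partition[OF assms(2) p that]
    by (rule matroid_cl_card_image[OF finite_subset[OF that assms(1)], symmetric])
  then show "\<exists>r. matroid_rank E r \<and> (\<forall>X. X \<subseteq> E \<longrightarrow> VH E \<C> X = matroid_cl E r X)"
    using matroid_rank_card_image[OF assms(1)] by blast
qed

end
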